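(* Let $N\ge 2$, let $q\in\mathbb C$, and let $\Gamma=(\Gamma_{jk})_{j,k=1}^N$ be a symmetric matrix with $\Gamma_{jj}=0$ whose entries are holomorphic functions of $(\lambda_1,\dots,\lambda_N)$ on a domain where the $\lambda_j$ are pairwise distinct. Put $U=\mathrm{diag}(\lambda_1,\dots,\lambda_N)$, $V=\Gamma U-U\Gamma$, and let $E_j$ be the $N\times N$ diagonal matrix with $1$ at position $(j,j)$ and $0$ elsewhere. A vector-valued function $\Phi=(\varphi_1,\dots,\varphi_N)^T$ of $(\lambda,\lambda_1,\dots,\lambda_N)$ satisfies the system $$\frac{\partial\Phi}{\partial\lambda}=-\sum_{j=1}^N\frac{E_j(V+qI)}{\lambda-\lambda_j}\Phi,\qquad \frac{\partial\Phi}{\partial\lambda_j}=\Big(\frac{E_j(V+qI)}{\lambda-\lambda_j}+\Gamma E_j-E_j\Gamma\Big)\Phi\quad(j=1,\dots,N)$$ if and only if, for all $j$, $$\lambda\frac{\partial\varphi_j}{\partial\lambda}+\mathbf E(\varphi_j)=-q\varphi_j,\qquad \frac{\partial\varphi_j}{\partial\lambda}+\mathbf e(\varphi_j)=0,\qquad \frac{\partial\varphi_j}{\partial\lambda_k}=\Gamma_{jk}\varphi_k\ \ (k\neq j),$$ where $\mathbf e=\sum_{k=1}^N\partial_{\lambda_k}$ and $\mathbf E=\sum_{k=1}^N\lambda_k\partial_{\lambda_k}$.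
   Context: All functions are holomorphic in $\lambda\in\mathbb C\setminus\{\lambda_1,\dots,\lambda_N\}$ (locally) and in $(\lambda_1,\dots,\lambda_N)$. *)

theory Defs
  imports "HOL-Analysis.Analysis"
begin

definition upd :: "complex^'n \<Rightarrow> 'n \<Rightarrow> complex \<Rightarrow> complex^'n" where
  "upd m k z = (\<chi> i. if i = k then z else m $ i)"

definition dlam :: "(complex \<Rightarrow> complex^'n \<Rightarrow> complex^'n) \<Rightarrow> complex \<Rightarrow> complex^'n \<Rightarrow> complex^'n" where
  "dlam Phi l m = (\<chi> j. deriv (\<lambda>z. Phi z m $ j) l)"

definition dk :: "(complex \<Rightarrow> complex^'n \<Rightarrow> complex^'n) \<Rightarrow> 'n \<Rightarrow> complex \<Rightarrow> complex^'n \<Rightarrow> complex^'n" where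
  "dk Phi k l m = (\<chi> j. deriv (\<lambda>z. Phi l (upd m k z) $ j) (m $ k))"

text \<open>Holomorphy (in each variable separately, which by Hartogs' theorem is holomorphy) on an open set.\<close>
definition holo_on :: "(complex \<times> (complex^'n)) set \<Rightarrow> (complex \<Rightarrow> complex^'n \<Rightarrow> complex) \<Rightarrow> bool" where
  "holo_on D f \<longleftrightarrow> (\<forall>(l, m) \<in> D. (\<lambda>z. f z m) field_differentiable at l \<and>
      (\<forall>k. (\<lambda>z. f l (upd m k z)) field_differentiable at (m $ k)))"

definition holo_on' :: "(complex^'n) set \<Rightarrow> (complex^'n \<Rightarrow> complex) \<Rightarrow> bool" where
  "holo_on' M g \<longleftrightarrow> (\<forall>m \<in> M. \<forall>k. (\<lambda>z. g (upd m k z)) field_differentiable at (m $ k))"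

definition diagm :: "complex^'n \<Rightarrow> complex^'n^'n" where
  "diagm d = (\<chi> i j. if i = j then d $ i else 0)"

definition Emat :: "'n \<Rightarrow> complex^'n^'n" where
  "Emat j = (\<chi> a b. if a = j \<and> b = j then 1 else 0)"

end

theory Submission
  imports Defs
begin

text \<open>
  Only two facts are used:
  l differs from every m_j, and Gamma has zero diagonal.

  Hence the matrix system says, row by row, that
  a_j = -W_j/(l - m_j), B_j_j = W_j/(l - m_j) - (G P)_j and B_k_j = G_jk P_k for k \<noteq> j
  (lemma matrix_system_rows).  Given the off-diagonal equations, the two scalar equations of
  the second system form a 2x2 linear system in (a_j, B_j_j) with determinant l - m_j
  (lemma two_by_two_solution) whose unique solution is the one above (lemma row_equivalence).
\<close>

lemma if_zero_mult: "(if P then x else 0) * (y::'a::semiring_0) = (if P then x * y else 0)"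
  by simp

lemma mult_if_zero: "(y::'a::semiring_0) * (if P then x else 0) = (if P then y * x else 0)"
  by simp

lemma matrix_diagm_entry: "(G ** diagm m) $ a $ b = G $ a $ b * m $ b"
  by (simp add: matrix_matrix_mult_def diagm_def if_zero_mult mult_if_zero sum.delta' cong: if_cong)

lemma diagm_matrix_entry: "(diagm m ** G) $ a $ b = m $ a * G $ a $ b"
  by (simp add: matrix_matrix_mult_def diagm_def if_zero_mult mult_if_zero sum.delta cong: if_cong)

lemma Emat_matrix_entry: "(Emat j ** A) $ a $ b = (if a = j then A $ j $ b else 0)"
  by (simp add: matrix_matrix_mult_def Emat_def if_zero_mult mult_if_zero sum.delta cong: if_cong)

lemma matrix_Emat_entry: "(A ** Emat k) $ a $ b = (if b = k then A $ a $ k else 0)"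
  by (simp add: matrix_matrix_mult_def Emat_def if_zero_mult mult_if_zero sum.delta' cong: if_cong)

lemma Emat_apply: "((Emat j ** A) *v P) $ i = (if i = j then (A *v P) $ j else 0)"
  by (simp add: matrix_vector_mult_def Emat_matrix_entry if_zero_mult mult_if_zero cong: if_cong)

lemma residue_entry:
  "(((G ** diagm m - diagm m ** G) + mat q) *v P) $ j
     = (\<Sum>k\<in>UNIV. G $ j $ k * (m $ k - m $ j) * P $ k) + q * P $ j"
  by (simp add: matrix_vector_mult_def matrix_diagm_entry diagm_matrix_entry mat_def
      algebra_simps sum.distrib sum_subtractf if_zero_mult mult_if_zero sum.delta cong: if_cong)

lemma commutator_Emat_entry:
  "((G ** Emat k - Emat k ** G) *v P) $ j
     = G $ j $ k * P $ k - (if j = k then (G *v P) $ k else 0)"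
  by (simp add: matrix_vector_mult_def Emat_matrix_entry matrix_Emat_entry
      algebra_simps sum_subtractf if_zero_mult mult_if_zero sum.delta sum.delta' cong: if_cong)

text \<open>The 2x2 linear system in (a, b) with determinant l - \<mu> and its unique solution; this is
  what turns the Euler-type and translation-type equations into the Fuchsian form.\<close>

lemma two_by_two_solution:
  fixes l \<mu> a b W S :: "'a::field"
  assumes "l \<noteq> \<mu>"
  shows "(a = - (W / (l - \<mu>)) \<and> b = W / (l - \<mu>) - S)
           \<longleftrightarrow> (l * a + \<mu> * b + \<mu> * S + W = 0 \<and> a + b + S = 0)"
proof -
  have solve_a: "a = - (W / (l - \<mu>)) \<longleftrightarrow> a * (l - \<mu>) + W = 0"
    using assms by (auto simp: field_simps)
  have regroup: "l * a + \<mu> * b + \<mu> * S + W = (a * (l - \<mu>) + W) + \<mu> * (a + b + S)"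
    by (simp add: algebra_simps)
  have "(l * a + \<mu> * b + \<mu> * S + W = 0 \<and> a + b + S = 0)
          \<longleftrightarrow> (a = - (W / (l - \<mu>)) \<and> a + b + S = 0)"
    unfolding regroup solve_a by auto
  moreover have "(a = - (W / (l - \<mu>)) \<and> b = W / (l - \<mu>) - S)
          \<longleftrightarrow> (a = - (W / (l - \<mu>)) \<and> a + b + S = 0)"
    by (auto simp: algebra_simps)
  ultimately show ?thesis by simp
qed

text \<open>Row by row, the matrix system prescribes the entries of a and of every B_k: the residue
  term only touches row j, and the commutator contributes G_jk P_k off the diagonal (here the
  zero diagonal of G is used) and - (G P)_j on it.\<close>

lemma matrix_system_rows:
  fixes G A :: "complex^'n^'n" and P a :: "complex^'n" and B :: "'n \<Rightarrow> complex^'n"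
  assumes diag: "\<forall>i. G $ i $ i = 0"
  shows "(a = - (\<Sum>j\<in>UNIV. (1 / (l - m $ j)) *s ((Emat j ** A) *v P)) \<and>
          (\<forall>j. B j = (1 / (l - m $ j)) *s ((Emat j ** A) *v P) + (G ** Emat j - Emat j ** G) *v P))
    \<longleftrightarrow> (\<forall>j. a $ j = - ((A *v P) $ j / (l - m $ j)) \<and>
              B j $ j = (A *v P) $ j / (l - m $ j) - (G *v P) $ j \<and>
              (\<forall>k. k \<noteq> j \<longrightarrow> B k $ j = G $ j $ k * P $ k))"
proof -
  have a_rows: "a = - (\<Sum>j\<in>UNIV. (1 / (l - m $ j)) *s ((Emat j ** A) *v P))
      \<longleftrightarrow> (\<forall>j. a $ j = - ((A *v P) $ j / (l - m $ j)))"
    by (simp add: vec_eq_iff sum_component Emat_apply mult_if_zero sum.delta' cong: if_cong)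
  have B_rows: "B k = (1 / (l - m $ k)) *s ((Emat k ** A) *v P) + (G ** Emat k - Emat k ** G) *v P
      \<longleftrightarrow> (\<forall>j. if j = k then B j $ j = (A *v P) $ j / (l - m $ j) - (G *v P) $ j
                else B k $ j = G $ j $ k * P $ k)" for k
    using diag by (auto simp: vec_eq_iff Emat_apply commutator_Emat_entry)
  show ?thesis
    unfolding a_rows B_rows by (auto split: if_splits)
qed

lemma sum_with_offdiagonal_rows:
  fixes G :: "'a::comm_semiring_0^'n^'n" and P :: "'a^'n" and B :: "'n \<Rightarrow> 'a^'n"
  assumes diag: "G $ j $ j = 0" and off: "\<forall>k. k \<noteq> j \<longrightarrow> B k $ j = G $ j $ k * P $ k"
  shows "(\<Sum>k\<in>UNIV. f k * B k $ j) = f j * B j $ j + (\<Sum>k\<in>UNIV. f k * (G $ j $ k * P $ k))"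
proof -
  have "(\<Sum>k\<in>UNIV. f k * B k $ j) = f j * B j $ j + (\<Sum>k\<in>UNIV - {j}. f k * B k $ j)"
    by (simp add: sum.remove)
  also have "(\<Sum>k\<in>UNIV - {j}. f k * B k $ j) = (\<Sum>k\<in>UNIV - {j}. f k * (G $ j $ k * P $ k))"
    using off by (intro sum.cong) auto
  also have "\<dots> = (\<Sum>k\<in>UNIV. f k * (G $ j $ k * P $ k))"
    using diag by (simp add: sum.remove[of UNIV j "\<lambda>k. f k * (G $ j $ k * P $ k)"])
  finally show ?thesis .
qed

lemma row_equivalence:
  fixes G :: "complex^'n^'n" and m P a :: "complex^'n" and B :: "'n \<Rightarrow> complex^'n"
    and j :: 'n and l q :: complex
  defines "W \<equiv> (((G ** diagm m - diagm m ** G) + mat q) *v P) $ j"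
  assumes dist: "l \<noteq> m $ j" and diag: "G $ j $ j = 0"
    and off: "\<forall>k. k \<noteq> j \<longrightarrow> B k $ j = G $ j $ k * P $ k"
  shows "(a $ j = - (W / (l - m $ j)) \<and> B j $ j = W / (l - m $ j) - (G *v P) $ j)
    \<longleftrightarrow> (l * a $ j + (\<Sum>k\<in>UNIV. m $ k * B k $ j) = - q * P $ j \<and>
         a $ j + (\<Sum>k\<in>UNIV. B k $ j) = 0)"
proof -
  define S where "S = (G *v P) $ j"
  define T where "T = (\<Sum>k\<in>UNIV. m $ k * (G $ j $ k * P $ k))"
  have W_split: "W = T - m $ j * S + q * P $ j"
    unfolding W_def residue_entry
    by (simp add: S_def T_def matrix_vector_mult_def algebra_simps sum_subtractf sum_distrib_left)
  have euler_sum: "(\<Sum>k\<in>UNIV. m $ k * B k $ j) = m $ j * B j $ j + T"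
    using sum_with_offdiagonal_rows[OF diag off, of "\<lambda>k. m $ k"] by (simp add: T_def)
  have translation_sum: "(\<Sum>k\<in>UNIV. B k $ j) = B j $ j + S"
    using sum_with_offdiagonal_rows[OF diag off, of "\<lambda>k. 1"]
    by (simp add: S_def matrix_vector_mult_def)
  have "l * a $ j + (\<Sum>k\<in>UNIV. m $ k * B k $ j) = - q * P $ j
      \<longleftrightarrow> l * a $ j + m $ j * B j $ j + m $ j * S + W = 0"
    unfolding euler_sum W_split by (simp add: algebra_simps eq_neg_iff_add_eq_0)
  then show ?thesis
    unfolding translation_sum S_def[symmetric] two_by_two_solution[OF dist]
    by (simp add: add.assoc)
qed

text \<open>The theorem at a single point (l, m): a stands for the lambda-derivative and B k for
  the lambda_k-derivative of Phi, P for the value of Phi, G for Gamma(m).\<close>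

lemma pointwise_equivalence:
  fixes G :: "complex^'n^'n" and m P a :: "complex^'n" and B :: "'n \<Rightarrow> complex^'n"
  assumes dist: "\<forall>j. l \<noteq> m $ j" and diag: "\<forall>i. G $ i $ i = 0"
  shows "(a = - (\<Sum>j\<in>UNIV. (1 / (l - m $ j)) *s
                   ((Emat j ** ((G ** diagm m - diagm m ** G) + mat q)) *v P)) \<and>
          (\<forall>j. B j = (1 / (l - m $ j)) *s ((Emat j ** ((G ** diagm m - diagm m ** G) + mat q)) *v P)
                     + (G ** Emat j - Emat j ** G) *v P))
    \<longleftrightarrow> (\<forall>j. l * a $ j + (\<Sum>k\<in>UNIV. m $ k * B k $ j) = - q * P $ j \<and>
              a $ j + (\<Sum>k\<in>UNIV. B k $ j) = 0 \<and>
              (\<forall>k. k \<noteq> j \<longrightarrow> B k $ j = G $ j $ k * P $ k))"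
  unfolding matrix_system_rows[OF diag]
  using row_equivalence[where G = G and a = a and B = B and P = P and q = q] dist diag
  by (intro iff_allI) blast

theorem mainTheorem1:
  fixes D :: "(complex \<times> (complex^'n)) set"
    and q :: complex
    and Gam :: "complex^'n \<Rightarrow> complex^'n^'n"
    and Phi :: "complex \<Rightarrow> complex^'n \<Rightarrow> complex^'n"
  assumes N2: "CARD('n) \<ge> 2"
    and D_open: "open D" and D_conn: "connected D"
    and D_dist: "\<forall>(l, m) \<in> D. (\<forall>j. l \<noteq> m $ j) \<and> (\<forall>j k. j \<noteq> k \<longrightarrow> m $ j \<noteq> m $ k)"
    and Gam_holo: "\<forall>a b. holo_on' (snd ` D) (\<lambda>m. Gam m $ a $ b)"
    and Gam_sym: "\<forall>m\<in>snd ` D. \<forall>a b. Gam m $ a $ b = Gam m $ b $ a"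
    and Gam_diag: "\<forall>m\<in>snd ` D. \<forall>a. Gam m $ a $ a = 0"
    and Phi_holo: "\<forall>j. holo_on D (\<lambda>l m. Phi l m $ j)"
  shows
   "(\<forall>(l, m) \<in> D.
       (let U = diagm m; G = Gam m; V = G ** U - U ** G in
         dlam Phi l m = - (\<Sum>j\<in>UNIV. (1 / (l - m $ j)) *s ((Emat j ** (V + mat q)) *v Phi l m)) \<and>
         (\<forall>j. dk Phi j l m = (1 / (l - m $ j)) *s ((Emat j ** (V + mat q)) *v Phi l m)
                              + (G ** Emat j - Emat j ** G) *v Phi l m)))
    \<longleftrightarrow>
    (\<forall>(l, m) \<in> D. \<forall>j.
       l * dlam Phi l m $ j + (\<Sum>k\<in>UNIV. m $ k * dk Phi k l m $ j) = - q * Phi l m $ j \<and>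
       dlam Phi l m $ j + (\<Sum>k\<in>UNIV. dk Phi k l m $ j) = 0 \<and>
       (\<forall>k. k \<noteq> j \<longrightarrow> dk Phi k l m $ j = Gam m $ j $ k * Phi l m $ k))"
proof -
  have "(let U = diagm m; G = Gam m; V = G ** U - U ** G in
         dlam Phi l m = - (\<Sum>j\<in>UNIV. (1 / (l - m $ j)) *s ((Emat j ** (V + mat q)) *v Phi l m)) \<and>
         (\<forall>j. dk Phi j l m = (1 / (l - m $ j)) *s ((Emat j ** (V + mat q)) *v Phi l m)
                              + (G ** Emat j - Emat j ** G) *v Phi l m))
    \<longleftrightarrow> (\<forall>j. l * dlam Phi l m $ j + (\<Sum>k\<in>UNIV. m $ k * dk Phi k l m $ j) = - q * Phi l m $ j \<and>
       dlam Phi l m $ j + (\<Sum>k\<in>UNIV. dk Phi k l m $ j) = 0 \<and>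
       (\<forall>k. k \<noteq> j \<longrightarrow> dk Phi k l m $ j = Gam m $ j $ k * Phi l m $ k))"
    if lm: "(l, m) \<in> D" for l m
  proof -
    have dist: "\<forall>j. l \<noteq> m $ j" using D_dist lm by auto
    have diag: "\<forall>i. Gam m $ i $ i = 0" using Gam_diag lm by force
    show ?thesis
      unfolding Let_def by (rule pointwise_equivalence[OF dist diag])
  qed
  then show ?thesis by auto
qed

end
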